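(* Let $\lambda>0$ and $\mu>0$, and let $i(\cdot)$ and $d(\cdot)$ be probability distributions on $\{1,2,\dots\}$ with $d(1)>0$. Consider the continuous-time Markov chain on sequence lengths $n\in\{0,1,2,\dots\}$ induced by the indel process described in the context: from length $n$ the chain jumps to $n+k$ ($k\ge1$) at rate $(n+1)\lambda i(k)$, and to $n-k$ ($1\le k\le n$) at rate $(n-k+1)\mu d(k)$. Suppose this length process is time reversible with respect to an equilibrium distribution $q$ on $\{0,1,2,\dots\}$, i.e. $q$ is a probability distribution satisfying detailed balance for all these transitions, and $q(n)>0$ for all $n$. Then: (i) $q(x)=r(1-r)^x$ for all $x\in\{0,1,2,\dots\}$, where $1-r=\dfrac{\lambda i(1)}{\mu d(1)}$ and $0<r<1$; (ii) $\dfrac{\lambda}{\mu}=\sum_{k=1}^\infty (1-r)^k d(k)<1$; (iii) $i(k)=\dfrac{\mu}{\lambda}(1-r)^k d(k)$ for all $k\in\{1,2,\dots\}$. Conversely, for any $r\in(0,1)$, any probability distribution $d$ on $\{1,2,\dots\}$ with $d(1)>0$, and any $\mu>0$, defining $\lambda$ by (ii) and $i$ by (iii) yields a probability distribution $i$ on $\{1,2,\dots\}$ and rates for which the length process is reversible with equilibrium distribution $q$ given by (i).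
   Context: Indel model. A sequence of length $n$ has bases numbered $1,\dots,n$ and positions numbered $0,\dots,n$ (base $j$ lies between positions $j-1$ and $j$). An insertion of size $k\ge1$ at position $p\in\{0,\dots,n\}$ adds $k$ bases at that position and occurs at rate $\lambda i(k)$ for each such position. A deletion of size $k$ at position $p\in\{0,\dots,n-1\}$ removes the bases between positions $p$ and $p+k$, is allowed only when $1\le k\le n-p$, and occurs at rate $\mu d(k)$ for each such allowed pair $(p,k)$. Here $i(\cdot)$ and $d(\cdot)$ (the base insertion and deletion fragment size distributions) are probability distributions on the positive integers, and $\lambda,\mu$ are the total insertion and deletion rates per site on an infinitely long sequence. Consequently, a sequence of length $n$ has $n+1$ insertion positions and exactly $n-k+1$ allowed deletion positions for fragments of size $k\le n$. *)

theory Defs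
  imports "HOL-Analysis.Analysis"
begin

(* A probability distribution on the positive integers {1,2,...}, as a function on nat
   with no mass at 0. *)
definition pos_int_dist :: "(nat \<Rightarrow> real) \<Rightarrow> bool" where
  "pos_int_dist p \<longleftrightarrow> p 0 = 0 \<and> (\<forall>k. 0 \<le> p k) \<and> p sums 1"

definition nat_dist :: "(nat \<Rightarrow> real) \<Rightarrow> bool" where
  "nat_dist q \<longleftrightarrow> (\<forall>n. 0 \<le> q n) \<and> q sums 1"

definition ins_rate :: "real \<Rightarrow> (nat \<Rightarrow> real) \<Rightarrow> nat \<Rightarrow> nat \<Rightarrow> real" where
  "ins_rate lam i n k = real (n + 1) * lam * i k"   (* n -> n+k, k >= 1 *)

definition del_rate :: "real \<Rightarrow> (nat \<Rightarrow> real) \<Rightarrow> nat \<Rightarrow> nat \<Rightarrow> real" where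
  "del_rate mu d n k = real (n - k + 1) * mu * d k"   (* n -> n-k, 1 <= k <= n *)

definition length_reversible ::
  "real \<Rightarrow> real \<Rightarrow> (nat \<Rightarrow> real) \<Rightarrow> (nat \<Rightarrow> real) \<Rightarrow> (nat \<Rightarrow> real) \<Rightarrow> bool" where
  "length_reversible lam mu i d q \<longleftrightarrow>
     nat_dist q \<and>
     (\<forall>n k. 1 \<le> k \<longrightarrow> q n * ins_rate lam i n k = q (n + k) * del_rate mu d (n + k) k)"

end

theory Submission
  imports Defs
begin

text \<open>Detailed balance for the one-step transitions n \<rightarrow> n+1 forces the equilibrium
  distribution to be geometric, q n = r (1 - r)^n, with 1 - r = \<lambda> i(1) / (\<mu> d(1)).
  Detailed balance for n \<rightarrow> n+k then reads \<lambda> i(k) = \<mu> (1 - r)^k d(k); summing over k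
  and using that i is a probability distribution gives \<lambda>/\<mu> = \<Sum>k (1 - r)^k d(k),
  which is < 1 because (1 - r)^k d(k) < d(k) for k = 1. Conversely, these formulas
  make every detailed balance equation an identity.\<close>

lemma length_reversible_balance:
  assumes "length_reversible lam mu i d q" and "1 \<le> k"
  shows "q n * lam * i k = q (n + k) * mu * d k"
proof -
  have "q n * ins_rate lam i n k = q (n + k) * del_rate mu d (n + k) k"
    using assms unfolding length_reversible_def by blast
  then have "real (n + 1) * (q n * lam * i k) = real (n + 1) * (q (n + k) * mu * d k)"
    unfolding ins_rate_def del_rate_def by (simp add: algebra_simps)
  then show ?thesis by simp
qed

lemma geometric_distribution_unique:
  fixes q :: "nat \<Rightarrow> real"
  assumes step: "\<And>n. q (Suc n) = c * q n" and sums: "q sums 1" and pos: "\<And>n. q n > 0"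
  shows "0 < c" and "c < 1" and "q n = (1 - c) * c ^ n"
proof -
  have q_eq: "q = (\<lambda>n. q 0 * c ^ n)"
  proof
    show "q n = q 0 * c ^ n" for n by (induction n) (simp_all add: step)
  qed
  show c_pos: "0 < c"
    using pos[of 0] pos[of 1] step[of 0] by (simp add: zero_less_mult_iff)
  have "summable (\<lambda>n. q 0 * c ^ n)"
    using sums_summable[OF sums] by (subst (asm) q_eq)
  then have "summable (\<lambda>n. c ^ n)"
    using summable_mult[of "\<lambda>n. q 0 * c ^ n" "1 / q 0"] pos[of 0] by simp
  then show c_less: "c < 1" using c_pos by simp
  have "q sums (q 0 * (1 / (1 - c)))"
    using geometric_sums[of c] c_pos c_less by (subst q_eq) (intro sums_mult, simp)
  then have "q 0 = 1 - c"
    using sums sums_unique2 c_less by (fastforce simp: field_simps)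
  then show "q n = (1 - c) * c ^ n" by (subst q_eq) simp
qed

lemma nat_dist_geometric:
  fixes r :: real
  assumes "0 < r" and "r < 1"
  shows "nat_dist (\<lambda>n. r * (1 - r) ^ n)"
  unfolding nat_dist_def
proof (intro conjI allI)
  show "0 \<le> r * (1 - r) ^ n" for n using assms by simp
  have "(\<lambda>n. r * (1 - r) ^ n) sums (r * (1 / (1 - (1 - r))))"
    using geometric_sums[of "1 - r"] assms by (intro sums_mult) simp
  then show "(\<lambda>n. r * (1 - r) ^ n) sums 1" using assms by simp
qed

lemma power_weighted_dist_bounds:
  fixes c :: real and d :: "nat \<Rightarrow> real"
  assumes c: "0 < c" "c < 1" and d_sums: "d sums 1" and d_nonneg: "\<And>k. 0 \<le> d k"
    and "0 < m" and d_pos: "0 < d m"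
  shows "summable (\<lambda>k. c ^ k * d k)" and "0 < (\<Sum>k. c ^ k * d k)"
    and "(\<Sum>k. c ^ k * d k) < 1"
proof -
  have d_summ: "summable d" using d_sums by (simp add: sums_iff)
  have nonneg: "0 \<le> c ^ k * d k" for k
    using c d_nonneg[of k] by simp
  have le: "c ^ k * d k \<le> d k" for k
    using mult_right_mono[OF power_le_one[of c k] d_nonneg[of k]] c by simp
  show summ: "summable (\<lambda>k. c ^ k * d k)"
    by (rule summable_comparison_test'[OF d_summ, of 0]) (use nonneg le in simp)
  show "0 < (\<Sum>k. c ^ k * d k)"
    using nonneg c d_pos by (subst suminf_pos_iff[OF summ]) (auto intro!: exI[of _ m])
  have "c ^ m < 1" using c \<open>0 < m\<close> by (simp add: power_less_one_iff)
  then have "0 < d m - c ^ m * d m" using d_pos by simp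
  then have "0 < (\<Sum>k. d k - c ^ k * d k)"
    using le by (subst suminf_pos_iff) (auto intro: summable_diff[OF d_summ summ])
  also have "(\<Sum>k. d k - c ^ k * d k) = 1 - (\<Sum>k. c ^ k * d k)"
    using suminf_diff[OF d_summ summ] d_sums by (simp add: sums_iff)
  finally show "(\<Sum>k. c ^ k * d k) < 1" by simp
qed

lemma length_reversible_characterisation:
  fixes lam mu :: real and i d q :: "nat \<Rightarrow> real"
  assumes lam: "lam > 0" and mu: "mu > 0" and i: "pos_int_dist i" and d: "pos_int_dist d"
    and d1: "d 1 > 0" and rev: "length_reversible lam mu i d q" and q_pos: "\<And>n. q n > 0"
  defines "c \<equiv> lam * i 1 / (mu * d 1)"
  shows "0 < c" and "c < 1" and "q n = (1 - c) * c ^ n"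
    and "(\<lambda>k. c ^ k * d k) sums (lam / mu)" and "lam / mu < 1"
    and "1 \<le> k \<Longrightarrow> i k = mu / lam * c ^ k * d k"
proof -
  have q_sums: "q sums 1"
    using rev unfolding length_reversible_def nat_dist_def by blast
  have step: "q (Suc n) = c * q n" for n
    using length_reversible_balance[OF rev, of 1 n] mu d1 by (simp add: c_def field_simps)
  note geom = geometric_distribution_unique[OF step q_sums q_pos]
  show c_pos: "0 < c" and c_less: "c < 1" and q_eq: "q n = (1 - c) * c ^ n" for n
    by (fact geom)+
  have i_eq: "lam / mu * i k = c ^ k * d k" for k
  proof (cases "k = 0")
    case True
    then show ?thesis using i d unfolding pos_int_dist_def by simp
  next
    case False
    then have "q 0 * (lam * i k) = q 0 * (c ^ k * mu * d k)"
      using length_reversible_balance[OF rev, of k 0] q_eq[of k] q_eq[of 0] c_less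
      by (simp add: mult_ac)
    then show ?thesis using q_pos[of 0] mu by (simp add: field_simps)
  qed
  then show "i k = mu / lam * c ^ k * d k" for k
    using lam mu by (simp add: field_simps flip: i_eq)
  have "(\<lambda>k. lam / mu * i k) sums (lam / mu * 1)"
    using i unfolding pos_int_dist_def by (intro sums_mult) blast
  then show sums: "(\<lambda>k. c ^ k * d k) sums (lam / mu)"
    by (simp only: i_eq mult_1_right)
  have "(\<Sum>k. c ^ k * d k) < 1"
    using d d1 c_pos c_less unfolding pos_int_dist_def
    by (intro power_weighted_dist_bounds(3)[of c d 1]) auto
  then show "lam / mu < 1" using sums by (simp add: sums_iff)
qed

lemma length_reversible_construction:
  fixes r mu lam :: real and d i :: "nat \<Rightarrow> real"
  assumes r: "0 < r" "r < 1" and d: "pos_int_dist d" and d1: "d 1 > 0" and mu: "mu > 0"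
    and lam_def: "lam = mu * (\<Sum>k. (1 - r) ^ k * d k)"
    and i_def: "i = (\<lambda>k. if k = 0 then 0 else mu / lam * (1 - r) ^ k * d k)"
  shows "lam > 0" and "pos_int_dist i" and "length_reversible lam mu i d (\<lambda>n. r * (1 - r) ^ n)"
proof -
  define S where "S = (\<Sum>k. (1 - r) ^ k * d k)"
  have d0: "d 0 = 0" using d unfolding pos_int_dist_def by simp
  note bounds = power_weighted_dist_bounds[of "1 - r" d 1]
  have summ: "summable (\<lambda>k. (1 - r) ^ k * d k)" and S_pos: "0 < S"
    using bounds r d d1 unfolding pos_int_dist_def S_def by auto
  show lam_pos: "lam > 0" using S_pos mu by (simp add: lam_def S_def)
  have i_eq: "i = (\<lambda>k. (1 - r) ^ k * d k / S)"
    using mu S_pos by (auto simp: i_def lam_def S_def d0 fun_eq_iff)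
  show "pos_int_dist i"
    unfolding pos_int_dist_def
  proof (intro conjI allI)
    show "i 0 = 0" by (simp add: i_def)
    show "0 \<le> i k" for k using r d S_pos by (simp add: i_eq pos_int_dist_def)
    have "(\<lambda>k. (1 - r) ^ k * d k / S) sums (S / S)"
      using summ unfolding S_def by (intro sums_divide) (simp add: summable_sums)
    then show "i sums 1" using S_pos by (simp add: i_eq)
  qed
  show "length_reversible lam mu i d (\<lambda>n. r * (1 - r) ^ n)"
    unfolding length_reversible_def
  proof (intro conjI allI impI nat_dist_geometric r)
    fix n k :: nat
    assume "1 \<le> k"
    then have "lam * i k = mu * (1 - r) ^ k * d k" using lam_pos by (simp add: i_def)
    then show "r * (1 - r) ^ n * ins_rate lam i n k
             = r * (1 - r) ^ (n + k) * del_rate mu d (n + k) k"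
      unfolding ins_rate_def del_rate_def by (simp add: power_add algebra_simps)
  qed
qed

theorem proposition1:
  shows
  "(\<forall>(lam::real) (mu::real) i d q.
      lam > 0 \<and> mu > 0 \<and> pos_int_dist i \<and> pos_int_dist d \<and> d 1 > 0 \<and>
      length_reversible lam mu i d q \<and> (\<forall>n. q n > 0) \<longrightarrow>
      (let r = 1 - lam * i 1 / (mu * d 1) in
         0 < r \<and> r < 1 \<and>
         (\<forall>x. q x = r * (1 - r) ^ x) \<and>
         (\<lambda>k. (1 - r) ^ k * d k) sums (lam / mu) \<and> lam / mu < 1 \<and>
         (\<forall>k\<ge>1. i k = mu / lam * (1 - r) ^ k * d k)))
   \<and>
   (\<forall>(r::real) d (mu::real).
      0 < r \<and> r < 1 \<and> pos_int_dist d \<and> d 1 > 0 \<and> mu > 0 \<longrightarrow>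
      (let lam = mu * (\<Sum>k. (1 - r) ^ k * d k);
           i = (\<lambda>k. if k = 0 then 0 else mu / lam * (1 - r) ^ k * d k)
       in lam > 0 \<and> pos_int_dist i \<and>
          length_reversible lam mu i d (\<lambda>x. r * (1 - r) ^ x)))"
proof (intro conjI allI impI)
  fix lam mu :: real and i d q :: "nat \<Rightarrow> real"
  assume "lam > 0 \<and> mu > 0 \<and> pos_int_dist i \<and> pos_int_dist d \<and> d 1 > 0 \<and>
      length_reversible lam mu i d q \<and> (\<forall>n. q n > 0)"
  then have "lam > 0" "mu > 0" "pos_int_dist i" "pos_int_dist d" "d 1 > 0"
    "length_reversible lam mu i d q" "\<And>n. q n > 0" by auto
  note characterisation = length_reversible_characterisation[OF this]
  define c where "c = lam * i 1 / (mu * d 1)"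
  show "let r = 1 - lam * i 1 / (mu * d 1) in
         0 < r \<and> r < 1 \<and> (\<forall>x. q x = r * (1 - r) ^ x) \<and>
         (\<lambda>k. (1 - r) ^ k * d k) sums (lam / mu) \<and> lam / mu < 1 \<and>
         (\<forall>k\<ge>1. i k = mu / lam * (1 - r) ^ k * d k)"
    unfolding Let_def c_def[symmetric] using characterisation[folded c_def] by simp
next
  fix r mu :: real and d :: "nat \<Rightarrow> real"
  assume "0 < r \<and> r < 1 \<and> pos_int_dist d \<and> d 1 > 0 \<and> mu > 0"
  then have "0 < r" "r < 1" "pos_int_dist d" "d 1 > 0" "mu > 0" by auto
  note construction = length_reversible_construction[OF this refl refl]
  show "let lam = mu * (\<Sum>k. (1 - r) ^ k * d k);
           i = (\<lambda>k. if k = 0 then 0 else mu / lam * (1 - r) ^ k * d k)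
       in lam > 0 \<and> pos_int_dist i \<and> length_reversible lam mu i d (\<lambda>x. r * (1 - r) ^ x)"
    unfolding Let_def using construction by blast
qed

end
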